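(* Let $\widehat x=\sum_{m=0}^\infty\sum_{k=0}^{2^m-1}e_{m,k}$ and $y=\sum_{m=0}^\infty\sum_{k=0}^{2^m-1}(-1)^me_{m,k}$ (these belong to $\mathscr X$ and admit the quadratic variation $\langle\widehat x\rangle_t=t=\langle y\rangle_t$ along the dyadic partitions $\mathbb T_n=\{k2^{-n}:k=0,\dots,2^n\}$). Then for all $t\in[0,1]$, $$\lim_{n\to\infty}\langle \widehat x+y\rangle^{2n}_t=\frac43t,\qquad \lim_{n\to\infty}\langle \widehat x+y\rangle^{2n+1}_t=\frac83t,$$ and $$\lim_{n\to\infty}\langle \widehat x,y\rangle^{2n}_t=-\frac13t,\qquad \lim_{n\to\infty}\langle \widehat x,y\rangle^{2n+1}_t=\frac13t.$$ In particular, for $t>0$ the limits of $\langle\widehat x+y\rangle^n_t$ and $\langle\widehat x,y\rangle^n_t$ as $n\to\infty$ do not exist, but $\widehat x+y$ admits different continuous quadratic variations along the two refining sequences $(\mathbb T_{2n})_{n\in\mathbb N}$ and $(\mathbb T_{2n+1})_{n\in\mathbb N}$.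
   Context: The Faber--Schauder functions are $e_{0,0}(t):=(\min\{t,1-t\})^+$ and $e_{m,k}(t):=2^{-m/2}e_{0,0}(2^m t-k)$ for $t\in\mathbb R$, $m\ge1$, $k\in\mathbb Z$. $\mathscr X$ denotes the set of all functions $x\in C[0,1]$ of the form $x=\sum_{m=0}^\infty\sum_{k=0}^{2^m-1}\theta_{m,k}e_{m,k}$ (uniformly convergent series) with $\theta_{m,k}\in\{-1,+1\}$. For $s\in\mathbb T_n$, $s'$ denotes its successor in $\mathbb T_n$ ($s'=\min\{u\in\mathbb T_n:u>s\}$ if $s<1$, $s'=1$ if $s=1$). For $x,z\in C[0,1]$: $\langle x\rangle^n_t:=\sum_{s\in\mathbb T_n,\,s\le t}(x(s')-x(s))^2$ and $\langle x,z\rangle^n_t:=\sum_{s\in\mathbb T_n,\,s\le t}(x(s')-x(s))(z(s')-z(s))$. A function $x$ admits the continuous quadratic variation $\langle x\rangle$ along a refining sequence of partitions $(\mathbb S_n)$ if $\langle x\rangle_t=\lim_n\sum_{s\in\mathbb S_n,s\le t}(x(s')-x(s))^2$ exists for all $t\in[0,1]$ and is continuous in $t$. *)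

theory Defs
  imports "HOL-Analysis.Analysis"
begin

definition fs00 :: "real \<Rightarrow> real" where
  "fs00 t = max (min t (1 - t)) 0"

definition fs :: "nat \<Rightarrow> int \<Rightarrow> real \<Rightarrow> real" where
  "fs m k t = 2 powr (- real m / 2) * fs00 (2 ^ m * t - real_of_int k)"

definition xhat :: "real \<Rightarrow> real" where
  "xhat t = (\<Sum>m. \<Sum>k<(2::nat) ^ m. fs m (int k) t)"

definition yfun :: "real \<Rightarrow> real" where
  "yfun t = (\<Sum>m. \<Sum>k<(2::nat) ^ m. (-1) ^ m * fs m (int k) t)"

definition dyadic :: "nat \<Rightarrow> real set" where
  "dyadic n = (\<lambda>k. real k / 2 ^ n) ` {0..2 ^ n}"

definition succ_pt :: "real set \<Rightarrow> real \<Rightarrow> real" where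
  "succ_pt S s = (if s < 1 then Min {u \<in> S. u > s} else 1)"

definition qv_sum :: "real set \<Rightarrow> (real \<Rightarrow> real) \<Rightarrow> real \<Rightarrow> real" where
  "qv_sum S x t = (\<Sum>s\<in>{s \<in> S. s \<le> t}. (x (succ_pt S s) - x s) ^ 2)"

definition cv_sum :: "real set \<Rightarrow> (real \<Rightarrow> real) \<Rightarrow> (real \<Rightarrow> real) \<Rightarrow> real \<Rightarrow> real" where
  "cv_sum S x z t = (\<Sum>s\<in>{s \<in> S. s \<le> t}. (x (succ_pt S s) - x s) * (z (succ_pt S s) - z s))"

definition admits_cqv :: "(nat \<Rightarrow> real set) \<Rightarrow> (real \<Rightarrow> real) \<Rightarrow> (real \<Rightarrow> real) \<Rightarrow> bool" where
  "admits_cqv S x q \<longleftrightarrow>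
     (\<forall>t\<in>{0..1}. (\<lambda>n. qv_sum (S n) x t) \<longlonglongrightarrow> q t) \<and> continuous_on {0..1} q"

end

theory Submission
  imports Defs "HOL-Real_Asymp.Real_Asymp"
begin

text \<open>On the level-n dyadic grid only the Schauder levels m < n are seen, and there the level-m
layer is piecewise linear with slope +-2^(m/2), the sign being a square wave of period 2^-m.
So the increment of sum_m theta_m e_(m,k) over the j-th grid interval is
2^-n sum_(m<n) theta_m 2^(m/2) sigma_m(j). Square waves of different periods are nearly
orthogonal: their partial cross sums are bounded by the smaller half-period, so in the sum of
products of increments up to t the off-diagonal terms contribute O(n^2 2^-n), and what remains
is t 2^-n sum_(m<n) theta_m phi_m 2^m. For the weights of x-hat and y this normalised sum has
different limits along even and odd n.\<close>

section \<open>Near-orthogonality of square waves\<close>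

lemma even_div_iff_mod_less:
  fixes j b :: nat
  assumes "0 < b"
  shows "even (j div b) \<longleftrightarrow> j mod (2*b) < b"
proof -
  have "j mod (2*b) = b * (j div b mod 2) + j mod b"
    using mod_mult2_eq[of j b 2] by (simp add: mult.commute)
  moreover have "j mod b < b" using assms by simp
  moreover have "j div b mod 2 = 0 \<or> j div b mod 2 = 1" by auto
  ultimately show ?thesis by (auto simp: even_iff_mod_2_eq_zero)
qed

definition zigzag :: "nat \<Rightarrow> nat \<Rightarrow> real" where
  "zigzag h s = (if s \<le> h then real s else real (2*h) - real s)"

lemma sum_square_wave_products:
  fixes h c J :: nat
  assumes h: "0 < h" and c: "0 < c"
  shows "(\<Sum>j<J. (-1::real)^(j div (2*h*c)) * (-1)^(j div h))
          = (-1)^(J div (2*h*c)) * zigzag h (J mod (2*h))"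
proof (induction J)
  case 0
  show ?case by (simp add: zigzag_def)
next
  case (Suc J)
  define s where "s = J mod (2*h)"
  have "s < 2*h" using h by (simp add: s_def)
  have sign: "(-1::real)^(J div h) = (if s < h then 1 else -1)"
    using even_div_iff_mod_less[OF h, of J] by (simp add: s_def)
  show ?case
  proof (cases "Suc s = 2*h")
    case True
    then have "Suc J mod (2*h) = 0" by (simp add: mod_Suc s_def)
    moreover have "\<not> s < h" using True h by simp
    moreover have "zigzag h s = 1"
    proof (cases "s = h")
      case True
      then show ?thesis using \<open>Suc s = 2*h\<close> by (simp add: zigzag_def)
    next
      case False
      then show ?thesis using \<open>Suc s = 2*h\<close> \<open>\<not> s < h\<close> by (simp add: zigzag_def)
    qed
    ultimately show ?thesis using Suc.IH sign by (simp add: s_def zigzag_def)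
  next
    case False
    then have next_mod: "Suc J mod (2*h) = Suc s" by (simp add: mod_Suc s_def)
    then have "Suc J div (2*h) * (2*h) = J div (2*h) * (2*h)"
      using div_mult_mod_eq[of J "2*h"] div_mult_mod_eq[of "Suc J" "2*h"]
      unfolding s_def by linarith
    then have "Suc J div (2*h) = J div (2*h)" using h by simp
    then have "Suc J div (2*h*c) = J div (2*h*c)" by (simp add: div_mult2_eq)
    moreover have "zigzag h (Suc s) = zigzag h s + (if s < h then 1 else -1)"
      using False \<open>s < 2*h\<close> by (auto simp: zigzag_def)
    ultimately show ?thesis using Suc.IH sign next_mod by (simp add: s_def algebra_simps)
  qed
qed

lemma abs_sum_square_wave_products_le:
  fixes h c J :: nat
  assumes "0 < h" "0 < c"
  shows "\<bar>\<Sum>j<J. (-1::real)^(j div (2*h*c)) * (-1)^(j div h)\<bar> \<le> real h"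
proof -
  have "J mod (2*h) < 2*h" using assms by simp
  then have "\<bar>zigzag h (J mod (2*h))\<bar> \<le> real h" by (auto simp: zigzag_def)
  then show ?thesis unfolding sum_square_wave_products[OF assms] by (simp add: abs_mult)
qed

text \<open>The sign of the slope of the level-m Schauder layer on the j-th interval of the
level-n grid (for m < n).\<close>
definition slope_sign :: "nat \<Rightarrow> nat \<Rightarrow> nat \<Rightarrow> real" where
  "slope_sign n m j = (-1)^(j div 2^(n-1-m))"

lemma abs_cross_sum_slope_sign_le_lt:
  assumes "m < m'" "m' < n"
  shows "\<bar>\<Sum>j<J. slope_sign n m j * slope_sign n m' j\<bar> * (sqrt (2^m) * sqrt (2^m')) \<le> 2^n"
proof -
  define h :: nat where "h = 2^(n-1-m')"
  define c :: nat where "c = 2^(m'-m-1)"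
  have "n-1-m = Suc ((n-1-m') + (m'-m-1))" using assms by simp
  then have period: "(2::nat)^(n-1-m) = 2*h*c"
    by (simp only: power_Suc power_add h_def c_def mult.assoc)
  have "\<bar>\<Sum>j<J. slope_sign n m j * slope_sign n m' j\<bar> \<le> real h"
    unfolding slope_sign_def period h_def[symmetric]
    by (rule abs_sum_square_wave_products_le) (auto simp: h_def c_def)
  moreover have "sqrt (2^m) * sqrt (2^m') \<le> (2::real)^m'"
  proof -
    have "sqrt (2^m) \<le> sqrt ((2::real)^m')" using assms by simp
    then have "sqrt (2^m) * sqrt (2^m') \<le> sqrt ((2::real)^m') * sqrt (2^m')"
      by (intro mult_right_mono) auto
    then show ?thesis by simp
  qed
  ultimately have "\<bar>\<Sum>j<J. slope_sign n m j * slope_sign n m' j\<bar> * (sqrt (2^m) * sqrt (2^m'))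
      \<le> real h * 2^m'"
    by (intro mult_mono) auto
  also have "real h * 2^m' = 2^(n-1)"
  proof -
    have "n - 1 = (n-1-m') + m'" using assms by simp
    then show ?thesis by (simp add: h_def power_add[symmetric])
  qed
  also have "(2::real)^(n-1) \<le> 2^n" by (intro power_increasing) auto
  finally show ?thesis .
qed

lemma abs_cross_sum_slope_sign_le:
  assumes "m \<noteq> m'" "m < n" "m' < n"
  shows "\<bar>\<Sum>j<J. slope_sign n m j * slope_sign n m' j\<bar> * (sqrt (2^m) * sqrt (2^m')) \<le> 2^n"
  using assms abs_cross_sum_slope_sign_le_lt[of m m' n J] abs_cross_sum_slope_sign_le_lt[of m' m n J]
  by (cases "m < m'") (auto simp: mult_ac)

definition schauder_incr :: "(nat \<Rightarrow> real) \<Rightarrow> nat \<Rightarrow> nat \<Rightarrow> real" where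
  "schauder_incr th n j = (\<Sum>m<n. th m * sqrt (2^m) * slope_sign n m j) / 2^n"

lemma schauder_incr_add:
  "schauder_incr th n j + schauder_incr ph n j = schauder_incr (\<lambda>m. th m + ph m) n j"
  unfolding schauder_incr_def
  by (simp add: sum.distrib[symmetric] add_divide_distrib[symmetric] algebra_simps)

lemma sum_schauder_incr_products:
  "(\<Sum>j<J. schauder_incr th n j * schauder_incr ph n j)
    = (\<Sum>m<n. \<Sum>m'<n. th m * ph m' * (sqrt (2^m) * sqrt (2^m'))
          * (\<Sum>j<J. slope_sign n m j * slope_sign n m' j)) / (2^n * 2^n)"
proof -
  have "(\<Sum>j<J. schauder_incr th n j * schauder_incr ph n j)
      = (\<Sum>j<J. \<Sum>m<n. \<Sum>m'<n. (th m * sqrt (2^m) * slope_sign n m j)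
          * (ph m' * sqrt (2^m') * slope_sign n m' j)) / (2^n * 2^n)"
    unfolding schauder_incr_def by (simp add: sum_product sum_divide_distrib)
  then show ?thesis
    by (simp add: sum.swap[of _ "{..<J}"] sum_distrib_left mult_ac)
qed

lemma sum_schauder_incr_products_approx:
  assumes th: "\<And>m. \<bar>th m\<bar> \<le> B" and ph: "\<And>m. \<bar>ph m\<bar> \<le> B"
  shows "\<bar>(\<Sum>j<J. schauder_incr th n j * schauder_incr ph n j)
           - real J / 2^n * ((\<Sum>m<n. th m * ph m * 2^m) / 2^n)\<bar> \<le> B^2 * real n^2 / 2^n"
proof -
  define T where "T m m' = th m * ph m' * (sqrt (2^m) * sqrt (2^m'))
      * (\<Sum>j<J. slope_sign n m j * slope_sign n m' j)" for m m'
  have "0 \<le> B" using th[of 0] by simp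
  have diagonal: "T m m = th m * ph m * 2^m * real J" for m
    by (simp add: T_def slope_sign_def power_mult_distrib[symmetric])
  have off_diagonal: "\<bar>T m m'\<bar> \<le> B^2 * 2^n" if "m < n" "m' < n" "m \<noteq> m'" for m m'
  proof -
    have "\<bar>T m m'\<bar> = (\<bar>th m\<bar> * \<bar>ph m'\<bar>) * (\<bar>\<Sum>j<J. slope_sign n m j * slope_sign n m' j\<bar>
        * (sqrt (2^m) * sqrt (2^m')))"
      unfolding T_def by (simp add: abs_mult mult_ac)
    also have "\<dots> \<le> B^2 * 2^n"
      unfolding power2_eq_square using th[of m] ph[of m'] \<open>0 \<le> B\<close>
        abs_cross_sum_slope_sign_le[OF that(3,1,2), of J]
      by (intro mult_mono) auto
    finally show ?thesis .
  qed
  have "(\<Sum>m<n. \<Sum>m'<n. T m m') = (\<Sum>m<n. T m m) + (\<Sum>m<n. \<Sum>m'\<in>{..<n}-{m}. T m m')"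
    by (simp add: sum.remove[of "{..<n}"] sum.distrib)
  moreover have "(\<Sum>m<n. T m m) = real J * (\<Sum>m<n. th m * ph m * 2^m)"
    by (simp add: diagonal sum_distrib_left mult_ac)
  ultimately have difference: "(\<Sum>j<J. schauder_incr th n j * schauder_incr ph n j)
      - real J / 2^n * ((\<Sum>m<n. th m * ph m * 2^m) / 2^n)
      = (\<Sum>m<n. \<Sum>m'\<in>{..<n}-{m}. T m m') / (2^n * 2^n)"
    unfolding sum_schauder_incr_products T_def[symmetric] by (simp add: field_simps)
  have off_diagonal_sum:  "\<bar>\<Sum>m<n. \<Sum>m'\<in>{..<n}-{m}. T m m'\<bar> \<le> (\<Sum>m<n. \<Sum>m'<n. B^2 * 2^n)"
  proof -
    have "\<bar>\<Sum>m<n. \<Sum>m'\<in>{..<n}-{m}. T m m'\<bar> \<le> (\<Sum>m<n. \<Sum>m'\<in>{..<n}-{m}. \<bar>T m m'\<bar>)"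
      by (rule order_trans[OF sum_abs]) (intro sum_mono sum_abs)
    also have "\<dots> \<le> (\<Sum>m<n. \<Sum>m'\<in>{..<n}-{m}. B^2 * 2^n)"
      using off_diagonal by (intro sum_mono) auto
    also have "\<dots> \<le> (\<Sum>m<n. \<Sum>m'<n. B^2 * 2^n)"
      using \<open>0 \<le> B\<close> by (intro sum_mono sum_mono2) auto
    finally show ?thesis .
  qed
  have "\<bar>\<Sum>m<n. \<Sum>m'\<in>{..<n}-{m}. T m m'\<bar> / (2^n * 2^n) \<le> B^2 * real n^2 * 2^n / (2^n * 2^n)"
    using off_diagonal_sum by (intro divide_right_mono) (auto simp: power2_eq_square mult_ac)
  then show ?thesis unfolding difference by (simp add: abs_divide)
qed

section \<open>Faber-Schauder layers on dyadic grids\<close>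

definition dyadic_pt :: "nat \<Rightarrow> nat \<Rightarrow> real" where
  "dyadic_pt n j = real j / 2^n"

definition schauder_layer :: "nat \<Rightarrow> real \<Rightarrow> real" where
  "schauder_layer m t = (\<Sum>k<(2::nat)^m. fs m (int k) t)"

definition schauder_series :: "(nat \<Rightarrow> real) \<Rightarrow> real \<Rightarrow> real" where
  "schauder_series th t = (\<Sum>m. th m * schauder_layer m t)"

lemma xhat_eq_schauder_series: "xhat = schauder_series (\<lambda>_. 1)"
  unfolding xhat_def schauder_series_def schauder_layer_def by auto

lemma yfun_eq_schauder_series: "yfun = schauder_series (\<lambda>m. (-1)^m)"
  unfolding yfun_def schauder_series_def schauder_layer_def by (auto simp: sum_distrib_left)

lemma fs00_eq_0: "y \<le> 0 \<or> 1 \<le> y \<Longrightarrow> fs00 y = 0"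
  by (auto simp: fs00_def)

lemma fs00_of_int: "fs00 (real_of_int z) = 0"
  by (rule fs00_eq_0) (cases "z \<le> 0"; simp)

lemma fs00_eq_left: "0 \<le> y \<Longrightarrow> y \<le> 1/2 \<Longrightarrow> fs00 y = y"
  by (simp add: fs00_def)

lemma fs00_eq_right: "1/2 \<le> y \<Longrightarrow> y \<le> 1 \<Longrightarrow> fs00 y = 1 - y"
  by (simp add: fs00_def)

lemma fs_dyadic_pt_eq_0:
  assumes "n \<le> m"
  shows "fs m k (dyadic_pt n j) = 0"
proof -
  have "(2::real)^m = 2^(m-n) * 2^n" using assms by (simp add: power_add[symmetric])
  then have "2^m * dyadic_pt n j - real_of_int k = real_of_int (int (j * 2^(m-n)) - k)"
    by (simp add: dyadic_pt_def)
  then show ?thesis unfolding fs_def by (simp only: fs00_of_int)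
qed

lemma schauder_series_dyadic_pt:
  "schauder_series th (dyadic_pt n j) = (\<Sum>m<n. th m * schauder_layer m (dyadic_pt n j))"
  unfolding schauder_series_def schauder_layer_def
  by (subst suminf_finite[of "{..<n}"]) (auto simp: fs_dyadic_pt_eq_0)

text \<open>In the scaled variable 2^m t, only the tent e_(m,q) is nonzero on [q, q + 1].\<close>
lemma schauder_layer_eq_tent:
  fixes q m :: nat
  assumes "q < 2^m" "0 \<le> u" "u \<le> 1" "2^m * t = real q + u"
  shows "schauder_layer m t = fs00 u / sqrt (2^m)"
proof -
  have other_tents: "fs00 (real q + u - real k) = 0" if "k \<in> {..<2^m} - {q}" for k
  proof -
    from that have "real k + 1 \<le> real q \<or> real k \<ge> real q + 1" by auto
    then show ?thesis using assms by (intro fs00_eq_0) auto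
  qed
  have "sqrt ((2::real)^m) = 2 powr (real m / 2)"
    by (metis powr_half_sqrt_powr powr_realpow zero_le_numeral zero_less_numeral)
  then have "(2::real) powr (- real m / 2) = 1 / sqrt (2^m)"
    by (simp add: powr_minus_divide)
  then have "schauder_layer m t = (\<Sum>k<(2::nat)^m. fs00 (real q + u - real k)) / sqrt (2^m)"
    unfolding schauder_layer_def fs_def assms(4) by (simp add: sum_divide_distrib)
  also have "(\<Sum>k<(2::nat)^m. fs00 (real q + u - real k)) = fs00 u"
    using assms(1) other_tents by (subst sum.remove[of _ q]) auto
  finally show ?thesis .
qed

lemma fs00_grid_incr:
  fixes r b :: nat
  assumes "r < 2*b"
  shows "fs00 ((real r + 1) / (2*b)) - fs00 (real r / (2*b)) = (if r < b then 1 else -1) / (2*b)"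
proof (cases "r < b")
  case True
  then have "(real r + 1) / (2*b) \<le> 1/2" "real r / (2*b) \<le> 1/2" by (simp_all add: divide_simps)
  then have "fs00 ((real r + 1) / (2*b)) = (real r + 1) / (2*b)"
    and "fs00 (real r / (2*b)) = real r / (2*b)"
    by (simp_all add: fs00_eq_left)
  then show ?thesis using True by (simp add: diff_divide_distrib[symmetric])
next
  case False
  have "real r / (2*b) \<ge> 1/2" "(real r + 1) / (2*b) \<ge> 1/2" "(real r + 1) / (2*b) \<le> 1"
    using False assms by (auto simp: divide_simps)
  moreover have "real r / (2*b) \<le> 1" using assms by (simp add: divide_simps)
  ultimately have "fs00 ((real r + 1) / (2*b)) = 1 - (real r + 1) / (2*b)"
    and "fs00 (real r / (2*b)) = 1 - real r / (2*b)"
    by (simp_all only: fs00_eq_right)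
  then show ?thesis using False by (simp add: diff_divide_distrib[symmetric])
qed

lemma schauder_layer_dyadic_incr:
  assumes "m < n" "j < 2^n"
  shows "schauder_layer m (dyadic_pt n (Suc j)) - schauder_layer m (dyadic_pt n j)
    = sqrt (2^m) * slope_sign n m j / 2^n"
proof -
  define b :: nat where "b = 2^(n-1-m)"
  define q where "q = j div (2*b)"
  define r where "r = j mod (2*b)"
  have "0 < b" by (simp add: b_def)
  have "n = m + Suc (n-1-m)" using assms by simp
  then have grid: "(2::nat)^n = 2^m * (2*b)" by (metis b_def power_Suc power_add)
  then have grid_real: "(2::real)^n = 2^m * (2*b)" by (metis of_nat_mult of_nat_numeral of_nat_power)
  have "r < 2*b" using \<open>0 < b\<close> by (simp add: r_def)
  have "q < 2^m"
    using assms(2) grid by (simp add: q_def less_mult_imp_div_less)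
  have "j = 2*b*q + r" by (simp add: q_def r_def)
  then have j: "real j = 2*b * real q + real r" by simp
  have scaled: "2^m * dyadic_pt n i = real i / (2*b)" for i
    using \<open>0 < b\<close> by (simp add: dyadic_pt_def grid_real)
  have "2^m * dyadic_pt n j = real q + real r / (2*b)"
    unfolding scaled j using \<open>0 < b\<close> by (simp add: add_divide_distrib)
  then have "schauder_layer m (dyadic_pt n j) = fs00 (real r / (2*b)) / sqrt (2^m)"
    using \<open>q < 2^m\<close> \<open>r < 2*b\<close> by (intro schauder_layer_eq_tent) auto
  moreover have "2^m * dyadic_pt n (Suc j) = real q + (real r + 1) / (2*b)"
    unfolding scaled using j \<open>0 < b\<close> by (simp add: add_divide_distrib)
  then have "schauder_layer m (dyadic_pt n (Suc j)) = fs00 ((real r + 1) / (2*b)) / sqrt (2^m)"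
    using \<open>q < 2^m\<close> \<open>r < 2*b\<close> by (intro schauder_layer_eq_tent) auto
  ultimately have "schauder_layer m (dyadic_pt n (Suc j)) - schauder_layer m (dyadic_pt n j)
      = (if r < b then 1 else -1) / (2*b) / sqrt (2^m)"
    using fs00_grid_incr[OF \<open>r < 2*b\<close>] by (simp add: diff_divide_distrib[symmetric])
  also have "\<dots> = sqrt (2^m) * (if r < b then 1 else -1) / (sqrt (2^m) * sqrt (2^m) * (2*b))"
    by (metis divide_divide_eq_left divide_divide_eq_left' real_divide_square_eq)
  also have "\<dots> = sqrt (2^m) * (if r < b then 1 else -1) / 2^n"
    unfolding grid_real by simp
  also have "(if r < b then 1 else -1) = slope_sign n m j"
    using even_div_iff_mod_less[OF \<open>0 < b\<close>, of j] by (simp add: slope_sign_def b_def r_def)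
  finally show ?thesis .
qed

lemma schauder_series_dyadic_incr:
  assumes "j < 2^n"
  shows "schauder_series th (dyadic_pt n (Suc j)) - schauder_series th (dyadic_pt n j)
    = schauder_incr th n j"
proof -
  have "schauder_series th (dyadic_pt n (Suc j)) - schauder_series th (dyadic_pt n j)
      = (\<Sum>m<n. th m * (schauder_layer m (dyadic_pt n (Suc j)) - schauder_layer m (dyadic_pt n j)))"
    unfolding schauder_series_dyadic_pt by (simp add: sum_subtractf right_diff_distrib)
  also have "\<dots> = (\<Sum>m<n. th m * (sqrt (2^m) * slope_sign n m j / 2^n))"
    using assms by (intro sum.cong) (simp_all add: schauder_layer_dyadic_incr)
  also have "\<dots> = schauder_incr th n j"
    unfolding schauder_incr_def sum_divide_distrib by (simp add: mult.assoc)
  finally show ?thesis .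
qed

section \<open>Variation sums along dyadic partitions\<close>

definition dyadic_count :: "nat \<Rightarrow> real \<Rightarrow> nat" where
  "dyadic_count n t = min (2^n) (nat \<lfloor>t * 2^n\<rfloor> + 1)"

lemma less_dyadic_count_iff:
  assumes "0 \<le> t"
  shows "j < dyadic_count n t \<longleftrightarrow> j < 2^n \<and> dyadic_pt n j \<le> t"
proof -
  have "j < nat \<lfloor>t * 2^n\<rfloor> + 1 \<longleftrightarrow> int j \<le> \<lfloor>t * 2^n\<rfloor>"
    using assms by (simp add: less_Suc_eq_le le_nat_iff)
  also have "\<dots> \<longleftrightarrow> dyadic_pt n j \<le> t"
    by (simp add: le_floor_iff dyadic_pt_def divide_le_eq)
  finally show ?thesis by (auto simp: dyadic_count_def)
qed

lemma dyadic_count_bounds: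
  assumes "0 \<le> t" "t \<le> 1"
  shows "t * 2^n \<le> real (dyadic_count n t)" "real (dyadic_count n t) \<le> t * 2^n + 1"
proof -
  have floor: "real (nat \<lfloor>t * 2^n\<rfloor> + 1) = real_of_int \<lfloor>t * 2^n\<rfloor> + 1" using assms by simp
  have "t * 2^n < real (nat \<lfloor>t * 2^n\<rfloor> + 1)" unfolding floor by linarith
  moreover have "t * 2^n \<le> (2::real)^n" using assms by simp
  ultimately show "t * 2^n \<le> real (dyadic_count n t)" by (auto simp: dyadic_count_def min_def)
  have "real (dyadic_count n t) \<le> real (nat \<lfloor>t * 2^n\<rfloor> + 1)"
    unfolding of_nat_le_iff by (simp add: dyadic_count_def)
  then show "real (dyadic_count n t) \<le> t * 2^n + 1" unfolding floor by linarith
qed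

lemma dyadic_count_tendsto:
  assumes "0 \<le> t" "t \<le> 1"
  shows "(\<lambda>n. real (dyadic_count n t) / 2^n) \<longlonglongrightarrow> t"
proof (rule tendsto_sandwich[of "\<lambda>_. t" _ _ "\<lambda>n. t + 1 / 2^n"])
  show "\<forall>\<^sub>F n in sequentially. t \<le> real (dyadic_count n t) / 2^n"
    using dyadic_count_bounds(1)[OF assms] by (simp add: le_divide_eq)
  show "\<forall>\<^sub>F n in sequentially. real (dyadic_count n t) / 2^n \<le> t + 1 / 2^n"
    using dyadic_count_bounds(2)[OF assms] by (simp add: divide_le_eq algebra_simps)
  show "(\<lambda>n. t + 1 / 2^n) \<longlonglongrightarrow> t" by real_asymp
qed simp

lemma dyadic_eq_image: "dyadic n = dyadic_pt n ` {0..2^n}"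
  unfolding dyadic_def dyadic_pt_def by simp

lemma succ_pt_dyadic:
  assumes "j < 2^n"
  shows "succ_pt (dyadic n) (dyadic_pt n j) = dyadic_pt n (Suc j)"
proof -
  have "Min {u \<in> dyadic n. u > dyadic_pt n j} = dyadic_pt n (Suc j)"
  proof (rule Min_eqI)
    show "finite {u \<in> dyadic n. u > dyadic_pt n j}" by (simp add: dyadic_eq_image)
    show "dyadic_pt n (Suc j) \<in> {u \<in> dyadic n. u > dyadic_pt n j}"
      using assms unfolding dyadic_eq_image
      by (auto intro!: rev_image_eqI[of "Suc j"] simp: dyadic_pt_def divide_strict_right_mono)
  next
    fix u assume "u \<in> {u \<in> dyadic n. u > dyadic_pt n j}"
    then obtain i where "u = dyadic_pt n i" "j < i"
      by (auto simp: dyadic_eq_image dyadic_pt_def divide_less_cancel)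
    then show "dyadic_pt n (Suc j) \<le> u" by (simp add: dyadic_pt_def divide_right_mono)
  qed
  moreover have "dyadic_pt n j < 1" using assms by (simp add: dyadic_pt_def)
  ultimately show ?thesis by (simp add: succ_pt_def)
qed

lemma cv_sum_dyadic:
  assumes t: "0 \<le> t" "t \<le> 1"
  shows "cv_sum (dyadic n) x z t = (\<Sum>j<dyadic_count n t.
      (x (dyadic_pt n (Suc j)) - x (dyadic_pt n j)) * (z (dyadic_pt n (Suc j)) - z (dyadic_pt n j)))"
proof -
  define F where "F s s' = (x s' - x s) * (z s' - z s)" for s s'
  define A where "A = {j. j \<le> 2^n \<and> dyadic_pt n j \<le> t}"
  have "{s \<in> dyadic n. s \<le> t} = dyadic_pt n ` A" unfolding A_def dyadic_eq_image by auto
  moreover have "inj (dyadic_pt n)" by (simp add: inj_def dyadic_pt_def)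
  ultimately have "cv_sum (dyadic n) x z t = (\<Sum>j\<in>A. F (dyadic_pt n j) (succ_pt (dyadic n) (dyadic_pt n j)))"
    unfolding cv_sum_def F_def by (simp add: sum.reindex inj_on_subset)
  also have "\<dots> = (\<Sum>j<dyadic_count n t. F (dyadic_pt n j) (dyadic_pt n (Suc j)))"
  proof (rule sum.mono_neutral_cong_right)
    show "finite A" by (simp add: A_def)
    show "{..<dyadic_count n t} \<subseteq> A" using less_dyadic_count_iff[OF t(1)] by (auto simp: A_def)
    show "\<forall>i\<in>A - {..<dyadic_count n t}. F (dyadic_pt n i) (succ_pt (dyadic n) (dyadic_pt n i)) = 0"
    proof
      fix i assume "i \<in> A - {..<dyadic_count n t}"
      then have "dyadic_pt n i = 1"
        using less_dyadic_count_iff[OF t(1), of i n] by (auto simp: A_def dyadic_pt_def)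
      then show "F (dyadic_pt n i) (succ_pt (dyadic n) (dyadic_pt n i)) = 0"
        by (simp add: F_def succ_pt_def)
    qed
    show "F (dyadic_pt n j) (succ_pt (dyadic n) (dyadic_pt n j)) = F (dyadic_pt n j) (dyadic_pt n (Suc j))"
      if "j \<in> {..<dyadic_count n t}" for j
      using that less_dyadic_count_iff[OF t(1), of j n] by (simp add: succ_pt_dyadic)
  qed
  finally show ?thesis by (simp add: F_def)
qed

lemma qv_sum_eq_cv_sum: "qv_sum S x t = cv_sum S x x t"
  by (simp add: qv_sum_def cv_sum_def power2_eq_square)

lemma qv_sum_dyadic_xhat_plus_yfun:
  assumes "0 \<le> t" "t \<le> 1"
  shows "qv_sum (dyadic n) (\<lambda>s. xhat s + yfun s) t = (\<Sum>j<dyadic_count n t.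
      schauder_incr (\<lambda>m. 1 + (-1)^m) n j * schauder_incr (\<lambda>m. 1 + (-1)^m) n j)"
  unfolding qv_sum_eq_cv_sum cv_sum_dyadic[OF assms]
proof (rule sum.cong)
  fix j assume "j \<in> {..<dyadic_count n t}"
  then have "j < 2^n" using less_dyadic_count_iff[OF assms(1)] by blast
  then have "xhat (dyadic_pt n (Suc j)) + yfun (dyadic_pt n (Suc j)) - (xhat (dyadic_pt n j) + yfun (dyadic_pt n j))
      = schauder_incr (\<lambda>m. 1 + (-1)^m) n j"
    by (simp add: xhat_eq_schauder_series yfun_eq_schauder_series schauder_incr_add[symmetric]
        flip: schauder_series_dyadic_incr)
  then show "(xhat (dyadic_pt n (Suc j)) + yfun (dyadic_pt n (Suc j)) - (xhat (dyadic_pt n j) + yfun (dyadic_pt n j)))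
      * (xhat (dyadic_pt n (Suc j)) + yfun (dyadic_pt n (Suc j)) - (xhat (dyadic_pt n j) + yfun (dyadic_pt n j)))
      = schauder_incr (\<lambda>m. 1 + (-1)^m) n j * schauder_incr (\<lambda>m. 1 + (-1)^m) n j"
    by simp
qed simp

lemma cv_sum_dyadic_xhat_yfun:
  assumes "0 \<le> t" "t \<le> 1"
  shows "cv_sum (dyadic n) xhat yfun t
    = (\<Sum>j<dyadic_count n t. schauder_incr (\<lambda>_. 1) n j * schauder_incr (\<lambda>m. (-1)^m) n j)"
  unfolding cv_sum_dyadic[OF assms] xhat_eq_schauder_series yfun_eq_schauder_series
  using less_dyadic_count_iff[OF assms(1)] by (intro sum.cong) (simp_all add: schauder_series_dyadic_incr)

lemma tendsto_sum_schauder_incr_products: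
  assumes th: "\<And>m. \<bar>th m\<bar> \<le> B" and ph: "\<And>m. \<bar>ph m\<bar> \<le> B"
    and t: "0 \<le> t" "t \<le> 1" and "strict_mono \<sigma>"
    and L: "(\<lambda>N. (\<Sum>m<\<sigma> N. th m * ph m * 2^m) / 2^(\<sigma> N)) \<longlonglongrightarrow> L"
  shows "(\<lambda>N. \<Sum>j<dyadic_count (\<sigma> N) t. schauder_incr th (\<sigma> N) j * schauder_incr ph (\<sigma> N) j)
    \<longlonglongrightarrow> t * L"
proof -
  define X where "X n = (\<Sum>j<dyadic_count n t. schauder_incr th n j * schauder_incr ph n j)" for n
  define A where "A n = real (dyadic_count n t) / 2^n" for n
  define C where "C n = (\<Sum>m<n. th m * ph m * 2^m) / 2^n" for n
  have bound: "norm (X n - A n * C n) \<le> B^2 * real n^2 / 2^n" for n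
    unfolding X_def A_def C_def real_norm_def by (rule sum_schauder_incr_products_approx[OF th ph])
  have "(\<lambda>n. B^2 * (real n^2 / 2^n)) \<longlonglongrightarrow> 0"
    by (rule tendsto_mult_right_zero) real_asymp
  then have "(\<lambda>n. B^2 * real n^2 / 2^n) \<longlonglongrightarrow> 0" by (simp only: times_divide_eq_right)
  from LIMSEQ_subseq_LIMSEQ[OF Lim_null_comparison[OF always_eventually[OF allI[OF bound]] this]
      \<open>strict_mono \<sigma>\<close>]
  have "(\<lambda>N. X (\<sigma> N) - A (\<sigma> N) * C (\<sigma> N)) \<longlonglongrightarrow> 0" by (simp add: o_def)
  moreover from LIMSEQ_subseq_LIMSEQ[OF dyadic_count_tendsto[OF t] \<open>strict_mono \<sigma>\<close>]
  have "(\<lambda>N. A (\<sigma> N)) \<longlonglongrightarrow> t" by (simp add: o_def A_def)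
  moreover have "(\<lambda>N. C (\<sigma> N)) \<longlonglongrightarrow> L" using L by (simp add: C_def)
  ultimately have "(\<lambda>N. (X (\<sigma> N) - A (\<sigma> N) * C (\<sigma> N)) + A (\<sigma> N) * C (\<sigma> N)) \<longlonglongrightarrow> 0 + t * L"
    by (intro tendsto_add tendsto_mult)
  then show ?thesis by (simp add: X_def)
qed

lemma sum_weights_xhat_yfun: "(\<Sum>m<n. 1 * (-1::real)^m * 2^m) = (1 - (-2)^n) / 3"
  using sum_gp_strict[of "-2::real" n] by (simp flip: power_mult_distrib)

lemma sum_weights_xhat_plus_yfun:
  "(\<Sum>m<n. (1 + (-1::real)^m) * (1 + (-1)^m) * 2^m) = 2 * (2^n - 1) + 2 * (1 - (-2)^n) / 3"
proof -
  have "(1 + (-1::real)^m) * (1 + (-1)^m) * 2^m = 2 * 2^m + 2 * (-2)^m" for m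
    by (cases "even m") (simp_all flip: power_mult_distrib)
  then have "(\<Sum>m<n. (1 + (-1::real)^m) * (1 + (-1)^m) * 2^m)
      = 2 * (\<Sum>m<n. 2^m) + 2 * (\<Sum>m<n. (-2)^m)"
    by (simp add: sum.distrib sum_distrib_left)
  also have "\<dots> = 2 * (2^n - 1) + 2 * (1 - (-2)^n) / 3"
    using sum_gp_strict[of "2::real" n] sum_gp_strict[of "-2::real" n] by simp
  finally show ?thesis .
qed

lemma tendsto_weights_xhat_plus_yfun_even:
  "(\<lambda>N. (\<Sum>m<2*N. (1 + (-1::real)^m) * (1 + (-1)^m) * 2^m) / 2^(2*N)) \<longlonglongrightarrow> 4/3"
  unfolding sum_weights_xhat_plus_yfun by (simp add: power_mult) real_asymp

lemma tendsto_weights_xhat_plus_yfun_odd: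
  "(\<lambda>N. (\<Sum>m<2*N+1. (1 + (-1::real)^m) * (1 + (-1)^m) * 2^m) / 2^(2*N+1)) \<longlonglongrightarrow> 8/3"
  unfolding sum_weights_xhat_plus_yfun by (simp add: power_mult) real_asymp

lemma tendsto_weights_xhat_yfun_even:
  "(\<lambda>N. (\<Sum>m<2*N. 1 * (-1::real)^m * 2^m) / 2^(2*N)) \<longlonglongrightarrow> -1/3"
  unfolding sum_weights_xhat_yfun by (simp add: power_mult) real_asymp

lemma tendsto_weights_xhat_yfun_odd:
  "(\<lambda>N. (\<Sum>m<2*N+1. 1 * (-1::real)^m * 2^m) / 2^(2*N+1)) \<longlonglongrightarrow> 1/3"
  unfolding sum_weights_xhat_yfun by (simp add: power_mult) real_asymp

lemma strict_mono_double: "strict_mono (\<lambda>N::nat. 2*N)"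
  by (rule strict_monoI) simp

lemma strict_mono_double_plus_one: "strict_mono (\<lambda>N::nat. 2*N+1)"
  by (rule strict_monoI) simp

lemma variation_limits_xhat_yfun:
  assumes t: "0 \<le> t" "t \<le> 1"
  shows "(\<lambda>n. qv_sum (dyadic (2*n)) (\<lambda>s. xhat s + yfun s) t) \<longlonglongrightarrow> 4/3 * t"
    and "(\<lambda>n. qv_sum (dyadic (2*n+1)) (\<lambda>s. xhat s + yfun s) t) \<longlonglongrightarrow> 8/3 * t"
    and "(\<lambda>n. cv_sum (dyadic (2*n)) xhat yfun t) \<longlonglongrightarrow> -1/3 * t"
    and "(\<lambda>n. cv_sum (dyadic (2*n+1)) xhat yfun t) \<longlonglongrightarrow> 1/3 * t"
proof -
  have plus: "\<bar>1 + (-1::real)^m\<bar> \<le> 2" and sign: "\<bar>(-1::real)^m\<bar> \<le> 2" and one: "\<bar>1::real\<bar> \<le> 2"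
    for m by (cases "even m") auto
  note limit = tendsto_sum_schauder_incr_products[OF _ _ t]
  show "(\<lambda>n. qv_sum (dyadic (2*n)) (\<lambda>s. xhat s + yfun s) t) \<longlonglongrightarrow> 4/3 * t"
    unfolding qv_sum_dyadic_xhat_plus_yfun[OF t] mult.commute[of _ t]
    by (rule limit[OF plus plus strict_mono_double tendsto_weights_xhat_plus_yfun_even])
  show "(\<lambda>n. qv_sum (dyadic (2*n+1)) (\<lambda>s. xhat s + yfun s) t) \<longlonglongrightarrow> 8/3 * t"
    unfolding qv_sum_dyadic_xhat_plus_yfun[OF t] mult.commute[of _ t]
    by (rule limit[OF plus plus strict_mono_double_plus_one tendsto_weights_xhat_plus_yfun_odd])
  show "(\<lambda>n. cv_sum (dyadic (2*n)) xhat yfun t) \<longlonglongrightarrow> -1/3 * t"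
    unfolding cv_sum_dyadic_xhat_yfun[OF t] mult.commute[of _ t]
    by (rule limit[OF one sign strict_mono_double tendsto_weights_xhat_yfun_even])
  show "(\<lambda>n. cv_sum (dyadic (2*n+1)) xhat yfun t) \<longlonglongrightarrow> 1/3 * t"
    unfolding cv_sum_dyadic_xhat_yfun[OF t] mult.commute[of _ t]
    by (rule limit[OF one sign strict_mono_double_plus_one tendsto_weights_xhat_yfun_odd])
qed

lemma not_convergent_if_even_odd_limits_differ:
  assumes "(\<lambda>n. X (2*n)) \<longlonglongrightarrow> a" "(\<lambda>n. X (2*n+1)) \<longlonglongrightarrow> b" "a \<noteq> (b :: 'a :: t2_space)"
  shows "\<not> convergent X"
proof
  assume "convergent X"
  then obtain L where "X \<longlonglongrightarrow> L" by (auto simp: convergent_def)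
  then have "(\<lambda>n. X (2*n)) \<longlonglongrightarrow> L" "(\<lambda>n. X (2*n+1)) \<longlonglongrightarrow> L"
    using LIMSEQ_subseq_LIMSEQ strict_mono_double strict_mono_double_plus_one by (auto simp: o_def)
  with assms show False using LIMSEQ_unique by metis
qed

theorem proposition2p7:
  shows "(\<forall>t\<in>{0..1}.
            (\<lambda>n. qv_sum (dyadic (2*n)) (\<lambda>s. xhat s + yfun s) t) \<longlonglongrightarrow> 4/3 * t
          \<and> (\<lambda>n. qv_sum (dyadic (2*n+1)) (\<lambda>s. xhat s + yfun s) t) \<longlonglongrightarrow> 8/3 * t
          \<and> (\<lambda>n. cv_sum (dyadic (2*n)) xhat yfun t) \<longlonglongrightarrow> -1/3 * t
          \<and> (\<lambda>n. cv_sum (dyadic (2*n+1)) xhat yfun t) \<longlonglongrightarrow> 1/3 * t)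
       \<and> (\<forall>t\<in>{0<..1}.
            \<not> convergent (\<lambda>n. qv_sum (dyadic n) (\<lambda>s. xhat s + yfun s) t)
          \<and> \<not> convergent (\<lambda>n. cv_sum (dyadic n) xhat yfun t))
       \<and> admits_cqv (\<lambda>n. dyadic (2*n)) (\<lambda>s. xhat s + yfun s) (\<lambda>t. 4/3 * t)
       \<and> admits_cqv (\<lambda>n. dyadic (2*n+1)) (\<lambda>s. xhat s + yfun s) (\<lambda>t. 8/3 * t)"
proof (intro conjI ballI)
  fix t :: real assume "t \<in> {0..1}"
  then have t: "0 \<le> t" "t \<le> 1" by auto
  show "(\<lambda>n. qv_sum (dyadic (2*n)) (\<lambda>s. xhat s + yfun s) t) \<longlonglongrightarrow> 4/3 * t"
    "(\<lambda>n. qv_sum (dyadic (2*n+1)) (\<lambda>s. xhat s + yfun s) t) \<longlonglongrightarrow> 8/3 * t"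
    "(\<lambda>n. cv_sum (dyadic (2*n)) xhat yfun t) \<longlonglongrightarrow> -1/3 * t"
    "(\<lambda>n. cv_sum (dyadic (2*n+1)) xhat yfun t) \<longlonglongrightarrow> 1/3 * t"
    by (fact variation_limits_xhat_yfun[OF t])+
next
  fix t :: real assume "t \<in> {0<..1}"
  then have t: "0 \<le> t" "t \<le> 1" and "t \<noteq> 0" by auto
  show "\<not> convergent (\<lambda>n. qv_sum (dyadic n) (\<lambda>s. xhat s + yfun s) t)"
    by (rule not_convergent_if_even_odd_limits_differ[OF variation_limits_xhat_yfun(1,2)[OF t]])
      (use \<open>t \<noteq> 0\<close> in simp)
  show "\<not> convergent (\<lambda>n. cv_sum (dyadic n) xhat yfun t)"
    by (rule not_convergent_if_even_odd_limits_differ[OF variation_limits_xhat_yfun(3,4)[OF t]])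
      (use \<open>t \<noteq> 0\<close> in simp)
next
  show "admits_cqv (\<lambda>n. dyadic (2*n)) (\<lambda>s. xhat s + yfun s) (\<lambda>t. 4/3 * t)"
    "admits_cqv (\<lambda>n. dyadic (2*n+1)) (\<lambda>s. xhat s + yfun s) (\<lambda>t. 8/3 * t)"
    unfolding admits_cqv_def using variation_limits_xhat_yfun(1,2)
    by (auto intro!: continuous_intros)
qed

end
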